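(* Assume the seeds are i.i.d. uniform on $[n]$. Let $[\eta_{\min},\eta_{\max}]\subset(0,\tfrac12)$ be a fixed compact interval. Let $(m_k)_{k\in\mathbb N}$ be positive integers with $m_k\to\infty$, let $(n_k)$ be an arbitrary sequence of even integers $n_k\ge6$, and let $(l_k)$ be integers with $2\le l_k\le n_k/2-1$ and $l_k/n_k\in[\eta_{\min},\eta_{\max}]$ for all $k$. Then $\lim_{k\to\infty}p_1(n_k,m_k,l_k)=1$.
   Context: Candidates $[n]$, $m$ voters; voter $j$ has the clockwise oriented preference list $(s_j,s_j+1,\dots,n,1,\dots,s_j-1)$ with seed $s_j$; seeds independent uniform on $[n]$. In an election among a non-empty $S\subseteq[n]$ each voter votes for the first candidate of $S$ in its list; $\Xi_S(i)$ is the number of votes for $i$. Two-round election with partition $(A,B)$: the winner of $A$ is the $a\in A$ with $\Xi_A(a)>\Xi_A(a')$ for all other $a'\in A$ (if none, nobody wins); likewise for $B$; between first-round winners $a,b$, $a$ wins iff $\Xi_{\{a,b\}}(a)>\Xi_{\{a,b\}}(b)$ (ties: nobody wins). $A^{(1,n,l)}=\{1,\dots,l\}\cup\{l+2i:1\le i\le(n-2l)/2\}$, $B^{(1,n,l)}=[n]\setminus A^{(1,n,l)}$, and $p_1(n,m,l)$ is the probability that candidate 1 wins with partition $(A^{(1,n,l)},B^{(1,n,l)})$. *)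

theory Defs
  imports "HOL-Analysis.Analysis"
begin

definition pref_list :: "nat \<Rightarrow> nat \<Rightarrow> nat list" where
  "pref_list n s = [s..<n+1] @ [1..<s]"

definition vote :: "nat \<Rightarrow> nat \<Rightarrow> nat set \<Rightarrow> nat" where
  "vote n s S = hd (filter (\<lambda>i. i \<in> S) (pref_list n s))"

definition Xi :: "nat \<Rightarrow> nat \<Rightarrow> (nat \<Rightarrow> nat) \<Rightarrow> nat set \<Rightarrow> nat \<Rightarrow> nat" where
  "Xi n m sd S i = card {j \<in> {0..<m}. vote n (sd j) S = i}"

definition wins_in :: "nat \<Rightarrow> nat \<Rightarrow> (nat \<Rightarrow> nat) \<Rightarrow> nat set \<Rightarrow> nat \<Rightarrow> bool" where
  "wins_in n m sd S a \<longleftrightarrow> a \<in> S \<and> (\<forall>a'\<in>S. a' \<noteq> a \<longrightarrow> Xi n m sd S a > Xi n m sd S a')"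

definition wins_two_round ::
  "nat \<Rightarrow> nat \<Rightarrow> (nat \<Rightarrow> nat) \<Rightarrow> nat set \<Rightarrow> nat set \<Rightarrow> nat \<Rightarrow> bool" where
  "wins_two_round n m sd A B c \<longleftrightarrow>
     wins_in n m sd A c \<and>
     (\<exists>b. wins_in n m sd B b \<and> Xi n m sd {c, b} c > Xi n m sd {c, b} b)"

definition A1 :: "nat \<Rightarrow> nat \<Rightarrow> nat set" where
  "A1 n l = {1..l} \<union> {l + 2 * i | i. 1 \<le> i \<and> i \<le> (n - 2 * l) div 2}"

definition B1 :: "nat \<Rightarrow> nat \<Rightarrow> nat set" where
  "B1 n l = {1..n} - A1 n l"

text \<open>p_1(n,m,l): seeds i.i.d. uniform on [n], i.e. the seed vector is uniform on [n]^m.\<close>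
definition p1 :: "nat \<Rightarrow> nat \<Rightarrow> nat \<Rightarrow> real" where
  "p1 n m l = real (card {sd \<in> {0..<m} \<rightarrow>\<^sub>E {1..n}. wins_two_round n m sd (A1 n l) (B1 n l) 1})
              / real n ^ m"

end

theory Submission
  imports Defs
begin

text \<open>
  In each of the three elections (among A, among B, and the runoff between 1 and l + 1) a voter's
  choice depends only on its own seed, so the number of votes of a candidate is the number of
  voters whose seed lies in a fixed set of seeds, a binomial count that Chebyshev's inequality
  controls. In A, candidate 1 is chosen by the l + 1 seeds 1, n - l + 1, ..., n, while every
  other candidate of A is chosen by at most two seeds; in B, candidate l + 1 is chosen by the
  seeds 1, ..., l + 1 and every other one by at most two; in the runoff, 1 is chosen by n - l
  seeds and l + 1 by l. As l/n stays in [eta_min, eta_max], each of these gaps is a fixed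
  fraction of n, so each predicted outcome fails with probability O(1/m), uniformly in n and l.
\<close>

section \<open>Binomial counts of seeds\<close>

definition seeds :: "'a set \<Rightarrow> nat \<Rightarrow> (nat \<Rightarrow> 'a) set" where
  "seeds Y m = {0..<m} \<rightarrow>\<^sub>E Y"

definition hits :: "nat \<Rightarrow> (nat \<Rightarrow> 'a) \<Rightarrow> 'a set \<Rightarrow> nat" where
  "hits m sd T = card {j\<in>{0..<m}. sd j \<in> T}"

lemma finite_seeds: "finite Y \<Longrightarrow> finite (seeds Y m)"
  by (simp add: seeds_def finite_PiE)

lemma card_seeds: "card (seeds Y m) = card Y ^ m"
  by (simp add: seeds_def card_PiE)

lemma sum_seeds_Suc:
  "(\<Sum>sd\<in>seeds Y (Suc m). f sd) = (\<Sum>y\<in>Y. \<Sum>g\<in>seeds Y m. f (g(m := y)))"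
proof -
  have "seeds Y (Suc m) = (\<lambda>(y, g). g(m := y)) ` (Y \<times> seeds Y m)"
    by (simp add: seeds_def atLeast0_lessThan_Suc PiE_insert_eq)
  moreover have "inj_on (\<lambda>(y, g). g(m := y)) (Y \<times> seeds Y m)"
    using inj_combinator[of m "{0..<m}" "\<lambda>_. Y"] by (simp add: seeds_def)
  ultimately show ?thesis
    by (simp add: sum.reindex sum.cartesian_product case_prod_unfold)
qed

lemma hits_fun_upd: "hits (Suc m) (g(m := y)) T = hits m g T + of_bool (y \<in> T)"
proof -
  have "{j\<in>{0..<Suc m}. (g(m := y)) j \<in> T} = {j\<in>{0..<m}. g j \<in> T} \<union> (if y \<in> T then {m} else {})"
    by auto
  then show ?thesis
    by (simp add: hits_def card_insert_if)
qed

lemma sum_hits_deviation: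
  assumes "finite Y" "T \<subseteq> Y"
  defines "p \<equiv> real (card T) / real (card Y)"
  shows "(\<Sum>sd\<in>seeds Y m. real (hits m sd T) - m * p) = 0"
proof (induction m)
  case 0
  then show ?case by (simp add: seeds_def hits_def)
next
  case (Suc m)
  have "(\<Sum>y\<in>Y. of_bool (y \<in> T) - p) = 0"
    using assms by (auto simp: sum_subtractf Int_absorb1 p_def)
  moreover have "(\<Sum>sd\<in>seeds Y (Suc m). real (hits (Suc m) sd T) - Suc m * p)
      = (\<Sum>y\<in>Y. \<Sum>g\<in>seeds Y m. (real (hits m g T) - m * p) + (of_bool (y \<in> T) - p))"
    by (simp add: sum_seeds_Suc hits_fun_upd algebra_simps)
  moreover have "\<dots> = real (card Y) ^ m * (\<Sum>y\<in>Y. of_bool (y \<in> T) - p)"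
    by (simp only: sum.distrib Suc.IH sum_constant card_seeds sum_distrib_left) simp
  ultimately show ?case by simp
qed

lemma sum_hits_deviation_sq:
  assumes "finite Y" "T \<subseteq> Y"
  defines "p \<equiv> real (card T) / real (card Y)"
  shows "(\<Sum>sd\<in>seeds Y m. (real (hits m sd T) - m * p)\<^sup>2) = real (card Y) ^ m * m * p * (1 - p)"
proof (induction m)
  case 0
  then show ?case by (simp add: seeds_def hits_def)
next
  case (Suc m)
  define D where "D g = real (hits m g T) - m * p" for g
  define X where "X y = of_bool (y \<in> T) - p" for y
  have card_T: "real (card T) = card Y * p"
    using assms by (auto simp: p_def)
  have "(\<Sum>y\<in>Y. (X y)\<^sup>2) = (\<Sum>y\<in>Y. (1 - 2 * p) * of_bool (y \<in> T) + p\<^sup>2)"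
    by (rule sum.cong) (simp_all add: X_def power2_eq_square algebra_simps)
  also have "\<dots> = (1 - 2 * p) * card T + card Y * p\<^sup>2"
    using assms by (simp add: sum.distrib Int_absorb1)
  also have "\<dots> = card Y * p * (1 - p)"
    by (simp add: card_T power2_eq_square algebra_simps)
  finally have sum_X_sq: "(\<Sum>y\<in>Y. (X y)\<^sup>2) = card Y * p * (1 - p)" .
  have sum_D: "(\<Sum>g\<in>seeds Y m. D g) = 0"
    unfolding D_def p_def by (rule sum_hits_deviation[OF assms(1,2)])
  have "(\<Sum>sd\<in>seeds Y (Suc m). (real (hits (Suc m) sd T) - Suc m * p)\<^sup>2)
      = (\<Sum>y\<in>Y. \<Sum>g\<in>seeds Y m. (D g)\<^sup>2 + 2 * X y * D g + (X y)\<^sup>2)"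
    unfolding sum_seeds_Suc
    by (intro sum.cong refl) (simp add: hits_fun_upd D_def X_def power2_eq_square algebra_simps)
  also have "\<dots> = (\<Sum>y\<in>Y. real (card Y) ^ m * m * p * (1 - p) + real (card Y) ^ m * (X y)\<^sup>2)"
    by (simp only: sum.distrib sum_D sum_constant card_seeds sum_distrib_left[symmetric]
        Suc.IH[folded D_def]) simp
  also have "\<dots> = card Y * (real (card Y) ^ m * m * p * (1 - p)) + real (card Y) ^ m * (card Y * p * (1 - p))"
    by (simp only: sum.distrib sum_constant sum_distrib_left[symmetric] sum_X_sq)
  also have "\<dots> = real (card Y) ^ Suc m * Suc m * p * (1 - p)"
    by (simp add: algebra_simps)
  finally show ?case .
qed

lemma card_hits_deviation_le:
  assumes "finite Y" "T \<subseteq> Y" "0 < d"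
  defines "p \<equiv> real (card T) / real (card Y)"
  shows "real (card {sd\<in>seeds Y m. d \<le> \<bar>real (hits m sd T) - m * p\<bar>})
    \<le> real (card Y) ^ m * m * p * (1 - p) / d\<^sup>2"
proof -
  define D where "D sd = real (hits m sd T) - m * p" for sd
  define B where "B = {sd\<in>seeds Y m. d \<le> \<bar>D sd\<bar>}"
  have "real (card B) * d\<^sup>2 = (\<Sum>sd\<in>B. d\<^sup>2)"
    by simp
  also have "\<dots> \<le> (\<Sum>sd\<in>B. (D sd)\<^sup>2)"
  proof (rule sum_mono)
    fix sd assume "sd \<in> B"
    then show "d\<^sup>2 \<le> (D sd)\<^sup>2"
      using assms(3) abs_le_square_iff[of d "D sd"] by (simp add: B_def)
  qed
  also have "\<dots> \<le> (\<Sum>sd\<in>seeds Y m. (D sd)\<^sup>2)"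
    by (rule sum_mono2) (auto simp: B_def finite_seeds assms(1))
  also have "\<dots> = real (card Y) ^ m * m * p * (1 - p)"
    unfolding D_def p_def by (rule sum_hits_deviation_sq[OF assms(1,2)])
  finally show ?thesis
    using assms(3) by (simp add: B_def D_def pos_le_divide_eq)
qed

lemma card_hits_rel_deviation_le:
  assumes "finite Y" "T \<subseteq> Y" "0 < m" "0 < \<delta>"
  defines "p \<equiv> real (card T) / real (card Y)"
  shows "real (card {sd\<in>seeds Y m. m * \<delta> \<le> \<bar>real (hits m sd T) - m * p\<bar>})
    \<le> real (card Y) ^ m * p / (m * \<delta>\<^sup>2)"
proof -
  have "0 \<le> p" "p \<le> 1"
    using card_mono[OF assms(1,2)] by (auto simp: p_def divide_le_eq_1)
  have "real (card {sd\<in>seeds Y m. m * \<delta> \<le> \<bar>real (hits m sd T) - m * p\<bar>})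
      \<le> real (card Y) ^ m * m * p * (1 - p) / (m * \<delta>)\<^sup>2"
    using card_hits_deviation_le[OF assms(1,2), of "m * \<delta>" m] assms(3,4) by (simp add: p_def)
  also have "\<dots> = real (card Y) ^ m * p / (m * \<delta>\<^sup>2) * (1 - p)"
    using assms(3,4) by (simp add: power2_eq_square field_simps)
  also have "\<dots> \<le> real (card Y) ^ m * p / (m * \<delta>\<^sup>2)"
    using \<open>0 \<le> p\<close> \<open>p \<le> 1\<close> by (intro mult_left_le) auto
  finally show ?thesis .
qed

section \<open>Plurality elections with a dominant candidate\<close>

lemma Xi_eq_hits:
  assumes "sd \<in> seeds {1..n} m"
  shows "Xi n m sd S a = hits m sd {s\<in>{1..n}. vote n s S = a}"
proof -
  have "sd j \<in> {1..n}" if "j \<in> {0..<m}" for j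
    using assms that by (auto simp: seeds_def)
  then have "{j\<in>{0..<m}. vote n (sd j) S = a} = {j\<in>{0..<m}. sd j \<in> {s\<in>{1..n}. vote n s S = a}}"
    by auto
  then show ?thesis
    by (simp add: Xi_def hits_def)
qed

lemma sum_card_fibers_le:
  assumes "finite Y" "finite A"
  shows "(\<Sum>a\<in>A. card {y\<in>Y. f y = a}) \<le> card Y"
proof -
  have "(\<Sum>a\<in>A. card {y\<in>Y. f y = a}) = card (\<Union>a\<in>A. {y\<in>Y. f y = a})"
    using assms by (intro card_UN_disjoint[symmetric]) auto
  also have "\<dots> \<le> card Y"
    using assms(1) by (intro card_mono) auto
  finally show ?thesis .
qed

lemma wins_in_if_counts_near_means:
  fixes q \<delta> :: real and n :: nat and S :: "nat set"
  defines "V a \<equiv> {s\<in>{1..n}. vote n s S = a}"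
  assumes "sd \<in> seeds {1..n} m" "w \<in> S"
    and win: "q + \<delta> \<le> real (card (V w)) / n"
    and lose: "\<And>a. a \<in> S \<Longrightarrow> a \<noteq> w \<Longrightarrow> real (card (V a)) / n \<le> q - \<delta>"
    and near: "\<And>a. a \<in> S \<Longrightarrow> \<bar>real (hits m sd (V a)) - m * (real (card (V a)) / n)\<bar> < m * \<delta>"
  shows "wins_in n m sd S w"
proof -
  have "m * (q + \<delta>) \<le> m * (real (card (V w)) / n)"
    using win by (intro mult_left_mono) auto
  then have above: "m * q < hits m sd (V w)"
    using near[OF assms(3)] by (simp add: abs_less_iff algebra_simps)
  have "hits m sd (V a) < hits m sd (V w)" if "a \<in> S" "a \<noteq> w" for a
  proof -
    have "m * (real (card (V a)) / n) \<le> m * (q - \<delta>)"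
      using lose[OF that] by (intro mult_left_mono) auto
    then have "hits m sd (V a) < m * q"
      using near[OF that(1)] by (simp add: abs_less_iff algebra_simps)
    then show ?thesis
      using above by (simp only: of_nat_less_iff[symmetric])
  qed
  moreover have "Xi n m sd S a = hits m sd (V a)" for a
    using assms(2) by (simp add: Xi_eq_hits V_def)
  ultimately show ?thesis
    using assms(3) by (simp add: wins_in_def)
qed

lemma card_not_wins_in_le:
  fixes q \<delta> :: real
  assumes "S \<subseteq> {1..n}" "w \<in> S" "0 < m" "0 < \<delta>"
    and win: "q + \<delta> \<le> real (card {s\<in>{1..n}. vote n s S = w}) / n"
    and lose: "\<And>a. a \<in> S \<Longrightarrow> a \<noteq> w \<Longrightarrow> real (card {s\<in>{1..n}. vote n s S = a}) / n \<le> q - \<delta>"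
  shows "real (card {sd\<in>seeds {1..n} m. \<not> wins_in n m sd S w}) \<le> 2 * real n ^ m / (m * \<delta>\<^sup>2)"
proof -
  define V where "V a = {s\<in>{1..n}. vote n s S = a}" for a
  define p where "p a = real (card (V a)) / n" for a
  define dev where "dev a = {sd\<in>seeds {1..n} m. m * \<delta> \<le> \<bar>real (hits m sd (V a)) - m * p a\<bar>}" for a
  define C where "C = real n ^ m / (m * \<delta>\<^sup>2)"
  have fin_S: "finite S"
    using assms(1) finite_subset by blast
  have V_sub: "V a \<subseteq> {1..n}" for a
    by (auto simp: V_def)
  have p_bounds: "0 \<le> p a" "p a \<le> 1" for a
    using card_mono[OF _ V_sub[of a]] by (auto simp: p_def divide_le_eq_1)
  have card_dev: "real (card (dev a)) \<le> C * p a" for a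
    using card_hits_rel_deviation_le[OF finite_atLeastAtMost V_sub[of a] assms(3,4)]
    by (simp add: dev_def p_def C_def ac_simps)
  have "sd \<in> dev w \<union> (\<Union>a\<in>S - {w}. dev a)" if sd: "sd \<in> seeds {1..n} m" "\<not> wins_in n m sd S w" for sd
  proof (rule ccontr)
    assume "sd \<notin> dev w \<union> (\<Union>a\<in>S - {w}. dev a)"
    then have "\<bar>real (hits m sd (V a)) - m * p a\<bar> < m * \<delta>" if "a \<in> S" for a
      using that sd(1) by (cases "a = w") (auto simp: dev_def not_le)
    then have "wins_in n m sd S w"
      using wins_in_if_counts_near_means[OF sd(1) assms(2) win lose] unfolding p_def V_def by blast
    with sd(2) show False
      by simp
  qed
  then have "{sd\<in>seeds {1..n} m. \<not> wins_in n m sd S w} \<subseteq> dev w \<union> (\<Union>a\<in>S - {w}. dev a)"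
    by blast
  then have "card {sd\<in>seeds {1..n} m. \<not> wins_in n m sd S w} \<le> card (dev w \<union> (\<Union>a\<in>S - {w}. dev a))"
    using fin_S by (intro card_mono) (auto simp: dev_def finite_seeds)
  also have "\<dots> \<le> card (dev w) + (\<Sum>a\<in>S - {w}. card (dev a))"
    using fin_S by (intro order.trans[OF card_Un_le] add_left_mono card_UN_le) auto
  finally have "real (card {sd\<in>seeds {1..n} m. \<not> wins_in n m sd S w})
      \<le> real (card (dev w)) + (\<Sum>a\<in>S - {w}. real (card (dev a)))"
    by (simp flip: of_nat_sum of_nat_add)
  also have "\<dots> \<le> C * p w + (\<Sum>a\<in>S - {w}. C * p a)"
    by (intro add_mono sum_mono card_dev)
  also have "\<dots> \<le> C + C"
    \<comment> \<open>the union bound is weighted by the vote shares, which sum to at most 1, so the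
      number of candidates does not enter\<close>
  proof -
    have "(\<Sum>a\<in>S - {w}. real (card (V a))) \<le> n"
      using sum_card_fibers_le[of "{1..n}" "S - {w}"] fin_S unfolding V_def
      by (simp flip: of_nat_sum)
    moreover have "0 < n"
      using assms(1,2) by force
    ultimately have "(\<Sum>a\<in>S - {w}. p a) \<le> 1"
      by (simp add: p_def divide_le_eq_1 flip: sum_divide_distrib)
    then show ?thesis
      unfolding sum_distrib_left[symmetric] using p_bounds[of w]
      by (intro add_mono mult_right_le_one_le) (auto simp: C_def p_bounds(1) intro!: sum_nonneg)
  qed
  finally show ?thesis
    by (simp add: C_def)
qed

section \<open>Votes among A1 n l, among B1 n l, and in the runoff\<close>

lemma hd_filter_upt:
  assumes "a \<le> v" "v < b" "P v" "\<And>x. a \<le> x \<Longrightarrow> x < v \<Longrightarrow> \<not> P x"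
  shows "hd (filter P [a..<b]) = v"
proof -
  have "[a..<b] = [a..<v] @ v # [Suc v..<b]"
    using assms(1,2) upt_add_eq_append[of a v "b - v"] upt_conv_Cons[of v b] by simp
  moreover have "filter P [a..<v] = []"
    using assms(4) by (auto simp: filter_empty_conv)
  ultimately show ?thesis
    using assms(3) by simp
qed

lemma vote_eq_first_after:
  assumes "s \<le> v" "v \<le> n" "v \<in> S" "\<And>x. x \<in> S \<Longrightarrow> s \<le> x \<Longrightarrow> v \<le> x"
  shows "vote n s S = v"
proof -
  have "v \<in> set (filter (\<lambda>i. i \<in> S) [s..<n+1])"
    using assms by (simp del: upt_Suc)
  then have "filter (\<lambda>i. i \<in> S) [s..<n+1] \<noteq> []"
    by (metis empty_iff list.set(1))
  moreover have "hd (filter (\<lambda>i. i \<in> S) [s..<n+1]) = v"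
    using assms by (intro hd_filter_upt) force+
  ultimately show ?thesis
    by (simp add: vote_def pref_list_def del: upt_Suc)
qed

lemma vote_eq_first_wrapped:
  assumes "1 \<le> v" "v < s" "v \<in> S" "\<And>x. x \<in> S \<Longrightarrow> x < s \<or> n < x" "\<And>x. x \<in> S \<Longrightarrow> 1 \<le> x \<Longrightarrow> v \<le> x"
  shows "vote n s S = v"
proof -
  have "filter (\<lambda>i. i \<in> S) [s..<n+1] = []"
    using assms(4) by (force simp: filter_empty_conv simp del: upt_Suc)
  moreover have "hd (filter (\<lambda>i. i \<in> S) [1..<s]) = v"
    using assms by (intro hd_filter_upt) force+
  ultimately show ?thesis
    by (simp add: vote_def pref_list_def del: upt_Suc)
qed

lemma mem_A1_iff:
  assumes "even n" "2 * l \<le> n"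
  shows "x \<in> A1 n l \<longleftrightarrow> (1 \<le> x \<and> x \<le> l) \<or> (l + 2 \<le> x \<and> x \<le> n - l \<and> even (x - l))"
proof
  assume "x \<in> A1 n l"
  then show "(1 \<le> x \<and> x \<le> l) \<or> (l + 2 \<le> x \<and> x \<le> n - l \<and> even (x - l))"
    unfolding A1_def using assms by auto
next
  assume x: "(1 \<le> x \<and> x \<le> l) \<or> (l + 2 \<le> x \<and> x \<le> n - l \<and> even (x - l))"
  show "x \<in> A1 n l"
  proof (cases "x \<le> l")
    case True
    then show ?thesis using x by (auto simp: A1_def)
  next
    case False
    then have "x = l + 2 * ((x - l) div 2) \<and> 1 \<le> (x - l) div 2 \<and> (x - l) div 2 \<le> (n - 2 * l) div 2"
      using x assms by auto
    then show ?thesis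
      unfolding A1_def by blast
  qed
qed

lemma mem_B1_iff:
  assumes "even n" "2 * l \<le> n"
  shows "x \<in> B1 n l \<longleftrightarrow> 1 \<le> x \<and> x \<le> n \<and> \<not> ((1 \<le> x \<and> x \<le> l) \<or> (l + 2 \<le> x \<and> x \<le> n - l \<and> even (x - l)))"
  using mem_A1_iff[OF assms] by (auto simp: B1_def)

lemma A1_subset: "l \<le> n \<Longrightarrow> A1 n l \<subseteq> {1..n}"
  by (auto simp: A1_def)

lemma one_mem_A1: "0 < l \<Longrightarrow> 1 \<in> A1 n l"
  by (simp add: A1_def)

lemma Suc_mem_B1: "even n \<Longrightarrow> 2 * l + 2 \<le> n \<Longrightarrow> l + 1 \<in> B1 n l"
  by (simp add: mem_B1_iff)

lemma vote_A1:
  assumes "even n" "0 < l" "2 * l + 2 \<le> n" "s \<in> {1..n}"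
  shows "vote n s (A1 n l) = (if s \<le> l then s else if s \<le> n - l then (if even (s - l) then s else s + 1) else 1)"
proof -
  note mem = mem_A1_iff[OF assms(1)]
  consider "s \<le> l" | "l < s" "s \<le> n - l" "even (s - l)" | "l < s" "s \<le> n - l" "odd (s - l)" | "n - l < s"
    by linarith
  then show ?thesis
  proof cases
    case 1
    then show ?thesis using assms by (auto intro!: vote_eq_first_after simp: mem)
  next
    case 2
    then have "l + 2 \<le> s" by presburger
    then show ?thesis using 2 assms by (auto intro!: vote_eq_first_after simp: mem)
  next
    case 3
    have "vote n s (A1 n l) = s + 1"
    proof (rule vote_eq_first_after)
      have "s \<notin> A1 n l"
        using 3 by (simp add: mem)
      then show "s + 1 \<le> x" if "x \<in> A1 n l" "s \<le> x" for x
        using that by (cases "x = s") auto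
      show "s + 1 \<in> A1 n l" "s + 1 \<le> n"
        using 3 assms by (auto simp: mem; presburger)+
    qed simp
    with 3 show ?thesis
      by simp
  next
    case 4
    then show ?thesis using assms by (auto intro!: vote_eq_first_wrapped simp: mem)
  qed
qed

lemma vote_B1:
  assumes "even n" "0 < l" "2 * l + 2 \<le> n" "s \<in> {1..n}"
  shows "vote n s (B1 n l) = (if s \<le> l + 1 then l + 1 else if s \<le> n - l \<and> even (s - l) then s + 1 else s)"
proof -
  note mem = mem_B1_iff[OF assms(1)]
  consider "s \<le> l + 1" | "l + 1 < s" "s \<le> n - l" "even (s - l)" | "l + 1 < s" "\<not> (s \<le> n - l \<and> even (s - l))"
    by linarith
  then show ?thesis
  proof cases
    case 1
    then show ?thesis using assms by (auto intro!: vote_eq_first_after simp: mem)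
  next
    case 2
    have "vote n s (B1 n l) = s + 1"
    proof (rule vote_eq_first_after)
      have "s \<notin> B1 n l"
        using 2 assms by (simp add: mem)
      then show "s + 1 \<le> x" if "x \<in> B1 n l" "s \<le> x" for x
        using that by (cases "x = s") auto
      show "s + 1 \<in> B1 n l" "s + 1 \<le> n"
        using 2 assms by (auto simp: mem; presburger)+
    qed simp
    with 2 show ?thesis
      by simp
  next
    case 3
    then show ?thesis using assms by (auto intro!: vote_eq_first_after simp: mem)
  qed
qed

lemma vote_runoff:
  assumes "l + 1 \<le> n" "s \<in> {1..n}"
  shows "vote n s {1, l + 1} = (if 2 \<le> s \<and> s \<le> l + 1 then l + 1 else 1)"
proof (cases "2 \<le> s \<and> s \<le> l + 1")
  case True
  then show ?thesis using assms by (auto intro!: vote_eq_first_after)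
next
  case False
  then consider "s = 1" | "l + 1 < s"
    using assms(2) by force
  then have "vote n s {1, l + 1} = 1"
  proof cases
    case 1
    then show ?thesis
      using assms by (intro vote_eq_first_after) auto
  next
    case 2
    then show ?thesis
      using assms by (intro vote_eq_first_wrapped) auto
  qed
  with False show ?thesis
    by simp
qed

lemma card_doubleton_le: "card {x, y} \<le> 2"
  by (simp add: card_insert_if)

lemma card_vote_A1_one:
  assumes "even n" "0 < l" "2 * l + 2 \<le> n"
  shows "l + 1 \<le> card {s\<in>{1..n}. vote n s (A1 n l) = 1}"
proof -
  have "insert 1 {n - l + 1..n} \<subseteq> {s\<in>{1..n}. vote n s (A1 n l) = 1}"
    using assms by (auto simp: vote_A1)
  then have "card (insert 1 {n - l + 1..n}) \<le> card {s\<in>{1..n}. vote n s (A1 n l) = 1}"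
    by (intro card_mono) auto
  moreover have "card (insert 1 {n - l + 1..n}) = l + 1"
    using assms by simp
  ultimately show ?thesis
    by simp
qed

lemma card_vote_A1_other:
  assumes "even n" "0 < l" "2 * l + 2 \<le> n" "a \<noteq> 1"
  shows "card {s\<in>{1..n}. vote n s (A1 n l) = a} \<le> 2"
proof -
  have "{s\<in>{1..n}. vote n s (A1 n l) = a} \<subseteq> {a - 1, a}"
    using assms by (auto simp: vote_A1 split: if_splits)
  then have "card {s\<in>{1..n}. vote n s (A1 n l) = a} \<le> card {a - 1, a}"
    by (intro card_mono) auto
  then show ?thesis
    using card_doubleton_le[of "a - 1" a] by linarith
qed

lemma card_vote_B1_Suc:
  assumes "even n" "0 < l" "2 * l + 2 \<le> n"
  shows "l + 1 \<le> card {s\<in>{1..n}. vote n s (B1 n l) = l + 1}"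
proof -
  have "{1..l + 1} \<subseteq> {s\<in>{1..n}. vote n s (B1 n l) = l + 1}"
    using assms by (auto simp: vote_B1)
  then show ?thesis
    using card_mono[OF _ \<open>{1..l + 1} \<subseteq> _\<close>] by simp
qed

lemma card_vote_B1_other:
  assumes "even n" "0 < l" "2 * l + 2 \<le> n" "b \<noteq> l + 1"
  shows "card {s\<in>{1..n}. vote n s (B1 n l) = b} \<le> 2"
proof -
  have "{s\<in>{1..n}. vote n s (B1 n l) = b} \<subseteq> {b - 1, b}"
    using assms by (auto simp: vote_B1 split: if_splits)
  then have "card {s\<in>{1..n}. vote n s (B1 n l) = b} \<le> card {b - 1, b}"
    by (intro card_mono) auto
  then show ?thesis
    using card_doubleton_le[of "b - 1" b] by linarith
qed

lemma card_vote_runoff_one: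
  assumes "l + 1 \<le> n"
  shows "n - l \<le> card {s\<in>{1..n}. vote n s {1, l + 1} = 1}"
proof -
  have "s \<in> {s\<in>{1..n}. vote n s {1, l + 1} = 1}" if "s \<in> insert 1 {l + 2..n}" for s
  proof -
    have "s \<in> {1..n}"
      using that assms by auto
    with that show ?thesis
      using vote_runoff[OF assms \<open>s \<in> {1..n}\<close>] by auto
  qed
  then have "insert 1 {l + 2..n} \<subseteq> {s\<in>{1..n}. vote n s {1, l + 1} = 1}"
    by blast
  then have "card (insert 1 {l + 2..n}) \<le> card {s\<in>{1..n}. vote n s {1, l + 1} = 1}"
    by (intro card_mono) auto
  moreover have "card (insert 1 {l + 2..n}) = n - l"
    using assms by simp
  ultimately show ?thesis
    by simp
qed

lemma card_vote_runoff_Suc: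
  assumes "0 < l" "l + 1 \<le> n"
  shows "card {s\<in>{1..n}. vote n s {1, l + 1} = l + 1} \<le> l"
proof -
  have "s \<in> {2..l + 1}" if "s \<in> {1..n}" "vote n s {1, l + 1} = l + 1" for s
    using vote_runoff[OF assms(2) that(1)] that(2) assms(1) by (auto split: if_splits)
  then have "{s\<in>{1..n}. vote n s {1, l + 1} = l + 1} \<subseteq> {2..l + 1}"
    by blast
  then have "card {s\<in>{1..n}. vote n s {1, l + 1} = l + 1} \<le> card {2..l + 1}"
    by (intro card_mono) auto
  then show ?thesis
    by simp
qed

section \<open>The two-round election\<close>

lemma midpoint_threshold_margins:
  fixes \<eta> :: real and l n :: nat
  assumes "2 \<le> l" "0 < n" "\<eta> \<le> l / n"
  shows "(real l + 3) / (2 * n) + \<eta> / 4 \<le> (real l + 1) / n"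
    and "2 / n \<le> (real l + 3) / (2 * n) - \<eta> / 4"
proof -
  have margin: "\<eta> / 4 \<le> (real l - 1) / (2 * n)"
    using assms by (simp add: field_simps)
  have "(real l + 1) / n = (real l + 3) / (2 * n) + (real l - 1) / (2 * n)"
    using assms(2) by (simp add: divide_simps)
  then show "(real l + 3) / (2 * n) + \<eta> / 4 \<le> (real l + 1) / n"
    using margin by linarith
  have "2 / n = (real l + 3) / (2 * n) - (real l - 1) / (2 * n)"
    using assms(2) by (simp add: divide_simps)
  then show "2 / n \<le> (real l + 3) / (2 * n) - \<eta> / 4"
    using margin by linarith
qed

lemma card_not_wins_A1_le:
  fixes \<eta> :: real
  assumes "even n" "2 \<le> l" "2 * l + 2 \<le> n" "0 < m" "0 < \<eta>" "\<eta> \<le> l / n"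
  shows "real (card {sd\<in>seeds {1..n} m. \<not> wins_in n m sd (A1 n l) 1}) \<le> 2 * real n ^ m / (m * (\<eta> / 4)\<^sup>2)"
proof (rule card_not_wins_in_le[where q = "(real l + 3) / (2 * n)"])
  have l_pos: "0 < l" and n_pos: "0 < n"
    using assms(2,3) by linarith+
  note margins = midpoint_threshold_margins[OF assms(2) n_pos assms(6)]
  show "(real l + 3) / (2 * n) + \<eta> / 4 \<le> real (card {s\<in>{1..n}. vote n s (A1 n l) = 1}) / n"
    using card_vote_A1_one[OF assms(1) l_pos assms(3)]
    by (intro order_trans[OF margins(1)] divide_right_mono) simp_all
  fix a assume "a \<in> A1 n l" "a \<noteq> 1"
  then have "real (card {s\<in>{1..n}. vote n s (A1 n l) = a}) / n \<le> 2 / n"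
    using card_vote_A1_other[OF assms(1) l_pos assms(3)] by (simp add: divide_right_mono)
  then show "real (card {s\<in>{1..n}. vote n s (A1 n l) = a}) / n \<le> (real l + 3) / (2 * n) - \<eta> / 4"
    using margins(2) by linarith
qed (use assms A1_subset one_mem_A1 in auto)

lemma card_not_wins_B1_le:
  fixes \<eta> :: real
  assumes "even n" "2 \<le> l" "2 * l + 2 \<le> n" "0 < m" "0 < \<eta>" "\<eta> \<le> l / n"
  shows "real (card {sd\<in>seeds {1..n} m. \<not> wins_in n m sd (B1 n l) (l + 1)}) \<le> 2 * real n ^ m / (m * (\<eta> / 4)\<^sup>2)"
proof (rule card_not_wins_in_le[where q = "(real l + 3) / (2 * n)"])
  have l_pos: "0 < l" and n_pos: "0 < n"
    using assms(2,3) by linarith+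
  note margins = midpoint_threshold_margins[OF assms(2) n_pos assms(6)]
  show "(real l + 3) / (2 * n) + \<eta> / 4 \<le> real (card {s\<in>{1..n}. vote n s (B1 n l) = l + 1}) / n"
    using card_vote_B1_Suc[OF assms(1) l_pos assms(3)]
    by (intro order_trans[OF margins(1)] divide_right_mono) simp_all
  fix b assume "b \<in> B1 n l" "b \<noteq> l + 1"
  then have "real (card {s\<in>{1..n}. vote n s (B1 n l) = b}) / n \<le> 2 / n"
    using card_vote_B1_other[OF assms(1) l_pos assms(3)] by (simp add: divide_right_mono)
  then show "real (card {s\<in>{1..n}. vote n s (B1 n l) = b}) / n \<le> (real l + 3) / (2 * n) - \<eta> / 4"
    using margins(2) by linarith
qed (use assms Suc_mem_B1 in \<open>auto simp: B1_def\<close>)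

lemma card_not_wins_runoff_le:
  fixes e :: real
  assumes "0 < l" "l + 1 \<le> n" "0 < m" "l / n \<le> e" "e < 1/2"
  shows "real (card {sd\<in>seeds {1..n} m. \<not> wins_in n m sd {1, l + 1} 1}) \<le> 2 * real n ^ m / (m * (1/2 - e)\<^sup>2)"
proof (rule card_not_wins_in_le[where q = "1/2"])
  have "1/2 + (1/2 - e) \<le> (real n - l) / n"
    using assms(2,4) by (simp add: field_simps)
  also have "\<dots> \<le> real (card {s\<in>{1..n}. vote n s {1, l + 1} = 1}) / n"
    using card_vote_runoff_one[OF assms(2)] assms(2) by (simp add: divide_right_mono)
  finally show "1/2 + (1/2 - e) \<le> real (card {s\<in>{1..n}. vote n s {1, l + 1} = 1}) / n" .
  fix a assume "a \<in> {1, l + 1}" "a \<noteq> 1"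
  then have "real (card {s\<in>{1..n}. vote n s {1, l + 1} = a}) / n \<le> l / n"
    using card_vote_runoff_Suc[OF assms(1,2)] by (simp add: divide_right_mono)
  then show "real (card {s\<in>{1..n}. vote n s {1, l + 1} = a}) / n \<le> 1/2 - (1/2 - e)"
    using assms(4) by simp
qed (use assms in auto)

lemma wins_two_round_if_wins_in:
  assumes "wins_in n m sd A c" "wins_in n m sd B b" "wins_in n m sd {c, b} c" "b \<noteq> c"
  shows "wins_two_round n m sd A B c"
  using assms by (auto simp: wins_two_round_def wins_in_def)

lemma p1_loss_le:
  fixes \<eta> e :: real
  assumes "even n" "2 \<le> l" "2 * l + 2 \<le> n" "0 < m"
    and "0 < \<eta>" "\<eta> \<le> l / n" "l / n \<le> e" "e < 1/2"
  shows "1 - p1 n m l \<le> (64 / \<eta>\<^sup>2 + 2 / (1/2 - e)\<^sup>2) / m"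
proof -
  define N where "N = real n ^ m"
  define W where "W = {sd \<in> {0..<m} \<rightarrow>\<^sub>E {1..n}. wins_two_round n m sd (A1 n l) (B1 n l) 1}"
  define LA where "LA = {sd\<in>seeds {1..n} m. \<not> wins_in n m sd (A1 n l) 1}"
  define LB where "LB = {sd\<in>seeds {1..n} m. \<not> wins_in n m sd (B1 n l) (l + 1)}"
  define LR where "LR = {sd\<in>seeds {1..n} m. \<not> wins_in n m sd {1, l + 1} 1}"
  have "seeds {1..n} m \<subseteq> W \<union> (LA \<union> LB \<union> LR)"
    using wins_two_round_if_wins_in[of n m _ "A1 n l" 1 "B1 n l" "l + 1"] assms(2)
    by (auto simp: W_def LA_def LB_def LR_def seeds_def)
  then have "card (seeds {1..n} m) \<le> card (W \<union> (LA \<union> LB \<union> LR))"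
    by (intro card_mono) (auto simp: W_def LA_def LB_def LR_def seeds_def finite_PiE)
  also have "\<dots> \<le> card W + (card LA + card LB + card LR)"
    using card_Un_le[of W "LA \<union> LB \<union> LR"] card_Un_le[of "LA \<union> LB" LR] card_Un_le[of LA LB]
    by linarith
  finally have "N - real (card W) \<le> real (card LA) + real (card LB) + real (card LR)"
    by (simp add: card_seeds N_def flip: of_nat_power)
  also have "\<dots> \<le> 2 * N / (m * (\<eta> / 4)\<^sup>2) + 2 * N / (m * (\<eta> / 4)\<^sup>2) + 2 * N / (m * (1/2 - e)\<^sup>2)"
    unfolding LA_def LB_def LR_def N_def using assms
    by (intro add_mono card_not_wins_A1_le card_not_wins_B1_le card_not_wins_runoff_le) auto
  also have "\<dots> = N * ((64 / \<eta>\<^sup>2 + 2 / (1/2 - e)\<^sup>2) / m)"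
    using assms(4,5,8) by (simp add: divide_simps power2_eq_square) (simp add: algebra_simps)
  finally show ?thesis
    using assms(3) by (simp add: p1_def W_def N_def field_simps)
qed

lemma p1_le_1: "p1 n m l \<le> 1"
proof -
  have "card {sd \<in> {0..<m} \<rightarrow>\<^sub>E {1..n}. wins_two_round n m sd (A1 n l) (B1 n l) 1}
      \<le> card ({0..<m} \<rightarrow>\<^sub>E {1..n})"
    by (intro card_mono) (auto simp: finite_PiE)
  then have "real (card {sd \<in> {0..<m} \<rightarrow>\<^sub>E {1..n}. wins_two_round n m sd (A1 n l) (B1 n l) 1}) \<le> real n ^ m"
    by (simp add: card_PiE flip: of_nat_power)
  then show ?thesis
    unfolding p1_def by (cases "real n ^ m = 0") simp_all
qed

theorem mainTheorem11:
  fixes eta_min eta_max :: real and m n l :: "nat \<Rightarrow> nat"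
  assumes "0 < eta_min" and "eta_min \<le> eta_max" and "eta_max < 1/2"
    and "\<forall>k. 0 < m k" and "filterlim m at_top sequentially"
    and "\<forall>k. even (n k) \<and> 6 \<le> n k"
    and "\<forall>k. 2 \<le> l k \<and> real (l k) \<le> real (n k) / 2 - 1"
    and "\<forall>k. eta_min \<le> real (l k) / real (n k) \<and> real (l k) / real (n k) \<le> eta_max"
  shows "(\<lambda>k. p1 (n k) (m k) (l k)) \<longlonglongrightarrow> 1"
proof -
  define K where "K = 64 / eta_min\<^sup>2 + 2 / (1/2 - eta_max)\<^sup>2"
  have lower: "1 - K / m k \<le> p1 (n k) (m k) (l k)" for k
  proof -
    note k = assms(4,6,7,8)[THEN spec[where x = k]]
    then have "2 * l k + 2 \<le> n k"
      by linarith
    with k have "1 - p1 (n k) (m k) (l k) \<le> K / m k"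
      unfolding K_def using assms(1,3) by (intro p1_loss_le) auto
    then show ?thesis
      by linarith
  qed
  have "filterlim (\<lambda>k. real (m k)) at_top sequentially"
    using filterlim_compose[OF filterlim_real_sequentially assms(5)] .
  then have "(\<lambda>k. K / real (m k)) \<longlonglongrightarrow> 0"
    by (intro tendsto_divide_0[OF tendsto_const] filterlim_at_top_imp_at_infinity)
  then have lim: "(\<lambda>k. 1 - K / real (m k)) \<longlonglongrightarrow> 1"
    using tendsto_diff[OF tendsto_const, of _ 0 sequentially 1] by simp
  show ?thesis
    by (rule tendsto_sandwich[OF _ _ lim tendsto_const]) (use lower p1_le_1 in auto)
qed

end
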